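(* Let $P$ be a finite atomic lattice that is ranked and whose Hasse diagram is a uniform layered graph. If $Q$ is a finite ranked poset with unique minimal element such that $Q\sim_BP$, then $Q_{\ge2}\cong P_{\ge2}$; that is, $P_{\ge2}$ is determined up to isomorphism by the doubly graded algebra $B(P)$.
   Context: A lattice is atomic if every element is a join of atoms (elements covering the minimum $\hat0$). A ranked poset has a rank function with $|x|=|y|+1$ whenever $x$ covers $y$ and $|x|=0$ iff $x$ is minimal; its Hasse diagram is the layered graph with layers $P_i=\{p:|p|=i\}$ and edges $(p,q)$ for coverings $p\gtrdot q$; $S(p)$ is the set of elements covered by $p$; $P_{\ge j}=\bigcup_{i\ge j}P_i$. The Hasse diagram is uniform if for every $p$ of rank $\ge2$ the elements of $S(p)$ form a single class under the transitive closure of $x\approx y$ iff $S(x)\cap S(y)\neq\emptyset$. For a layered graph with vertex set $V=\bigsqcup V_i$, $V_+=\bigsqcup_{i\ge1}V_i$, $B(\Gamma)=T(V_+)/R_B$ over a field $\mathbb F$, where $R_B$ is generated by $\{vw: v,w\in V_+,(v,w)\notin E\}\cup\{v\sum_{w\in S(v)}w: |v|\ge2\}$, doubly graded with $v_1\cdots v_m$ in bidegree $(m,\sum|v_i|)$. $Q\sim_BP$ means there is a doubly graded algebra isomorphism $B(P)\to B(Q)$. *)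

theory Defs
  imports Main
begin

definition is_poset :: "'a set \<Rightarrow> ('a \<Rightarrow> 'a \<Rightarrow> bool) \<Rightarrow> bool" where
  "is_poset A le \<longleftrightarrow>
     (\<forall>x\<in>A. le x x) \<and>
     (\<forall>x\<in>A. \<forall>y\<in>A. le x y \<and> le y x \<longrightarrow> x = y) \<and>
     (\<forall>x\<in>A. \<forall>y\<in>A. \<forall>z\<in>A. le x y \<and> le y z \<longrightarrow> le x z)"

definition covers :: "'a set \<Rightarrow> ('a \<Rightarrow> 'a \<Rightarrow> bool) \<Rightarrow> 'a \<Rightarrow> 'a \<Rightarrow> bool" where
  "covers A le x y \<longleftrightarrow> x \<in> A \<and> y \<in> A \<and> le y x \<and> x \<noteq> y \<and>
     \<not> (\<exists>z\<in>A. le y z \<and> le z x \<and> z \<noteq> y \<and> z \<noteq> x)"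

definition minimal_el :: "'a set \<Rightarrow> ('a \<Rightarrow> 'a \<Rightarrow> bool) \<Rightarrow> 'a \<Rightarrow> bool" where
  "minimal_el A le x \<longleftrightarrow> x \<in> A \<and> (\<forall>y\<in>A. le y x \<longrightarrow> y = x)"

definition rank_function :: "'a set \<Rightarrow> ('a \<Rightarrow> 'a \<Rightarrow> bool) \<Rightarrow> ('a \<Rightarrow> nat) \<Rightarrow> bool" where
  "rank_function A le r \<longleftrightarrow>
     (\<forall>x\<in>A. \<forall>y\<in>A. covers A le x y \<longrightarrow> r x = r y + 1) \<and>
     (\<forall>x\<in>A. r x = 0 \<longleftrightarrow> minimal_el A le x)"

definition ranked :: "'a set \<Rightarrow> ('a \<Rightarrow> 'a \<Rightarrow> bool) \<Rightarrow> bool" where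
  "ranked A le \<longleftrightarrow> (\<exists>r. rank_function A le r)"

text \<open>The rank |x| (uniquely determined on A for a finite ranked poset).\<close>
definition rk :: "'a set \<Rightarrow> ('a \<Rightarrow> 'a \<Rightarrow> bool) \<Rightarrow> 'a \<Rightarrow> nat" where
  "rk A le = (SOME r. rank_function A le r)"

definition is_lub :: "'a set \<Rightarrow> ('a \<Rightarrow> 'a \<Rightarrow> bool) \<Rightarrow> 'a set \<Rightarrow> 'a \<Rightarrow> bool" where
  "is_lub A le S x \<longleftrightarrow> x \<in> A \<and> (\<forall>s\<in>S. le s x) \<and> (\<forall>y\<in>A. (\<forall>s\<in>S. le s y) \<longrightarrow> le x y)"

definition is_glb :: "'a set \<Rightarrow> ('a \<Rightarrow> 'a \<Rightarrow> bool) \<Rightarrow> 'a set \<Rightarrow> 'a \<Rightarrow> bool" where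
  "is_glb A le S x \<longleftrightarrow> x \<in> A \<and> (\<forall>s\<in>S. le x s) \<and> (\<forall>y\<in>A. (\<forall>s\<in>S. le y s) \<longrightarrow> le y x)"

definition is_lattice :: "'a set \<Rightarrow> ('a \<Rightarrow> 'a \<Rightarrow> bool) \<Rightarrow> bool" where
  "is_lattice A le \<longleftrightarrow> is_poset A le \<and> A \<noteq> {} \<and>
     (\<forall>x\<in>A. \<forall>y\<in>A. (\<exists>z. is_lub A le {x, y} z) \<and> (\<exists>z. is_glb A le {x, y} z))"

definition atom :: "'a set \<Rightarrow> ('a \<Rightarrow> 'a \<Rightarrow> bool) \<Rightarrow> 'a \<Rightarrow> bool" where
  "atom A le a \<longleftrightarrow> (\<exists>z\<in>A. (\<forall>y\<in>A. le z y) \<and> covers A le a z)"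

definition atomic :: "'a set \<Rightarrow> ('a \<Rightarrow> 'a \<Rightarrow> bool) \<Rightarrow> bool" where
  "atomic A le \<longleftrightarrow> (\<forall>x\<in>A. \<exists>S. S \<subseteq> {a. atom A le a} \<and> is_lub A le S x)"

definition Sdown :: "'a set \<Rightarrow> ('a \<Rightarrow> 'a \<Rightarrow> bool) \<Rightarrow> 'a \<Rightarrow> 'a set" where
  "Sdown A le p = {q. covers A le p q}"

definition uniform :: "'a set \<Rightarrow> ('a \<Rightarrow> 'a \<Rightarrow> bool) \<Rightarrow> bool" where
  "uniform A le \<longleftrightarrow> (\<forall>p\<in>A. rk A le p \<ge> 2 \<longrightarrow>
     (\<forall>x\<in>Sdown A le p. \<forall>y\<in>Sdown A le p.
        (\<lambda>u v. u \<in> Sdown A le p \<and> v \<in> Sdown A le p \<and>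
               Sdown A le u \<inter> Sdown A le v \<noteq> {})\<^sup>*\<^sup>* x y))"

definition Vplus :: "'a set \<Rightarrow> ('a \<Rightarrow> 'a \<Rightarrow> bool) \<Rightarrow> 'a set" where
  "Vplus A le = {v \<in> A. rk A le v \<ge> 1}"

definition geq2 :: "'a set \<Rightarrow> ('a \<Rightarrow> 'a \<Rightarrow> bool) \<Rightarrow> 'a set" where
  "geq2 A le = {v \<in> A. rk A le v \<ge> 2}"

section \<open>Tensor algebra T(V) over a field: finitely supported functions on words\<close>

definition tensor_elems :: "'a set \<Rightarrow> ('a list \<Rightarrow> 'k::field) set" where
  "tensor_elems V = {f. finite {w. f w \<noteq> 0} \<and> (\<forall>w. f w \<noteq> 0 \<longrightarrow> set w \<subseteq> V)}"

definition word :: "'a list \<Rightarrow> ('a list \<Rightarrow> 'k::field)" where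
  "word w = (\<lambda>u. if u = w then 1 else 0)"

definition tadd :: "('a list \<Rightarrow> 'k::field) \<Rightarrow> ('a list \<Rightarrow> 'k) \<Rightarrow> ('a list \<Rightarrow> 'k)" where
  "tadd f g = (\<lambda>w. f w + g w)"

definition tsmult :: "'k::field \<Rightarrow> ('a list \<Rightarrow> 'k) \<Rightarrow> ('a list \<Rightarrow> 'k)" where
  "tsmult c f = (\<lambda>w. c * f w)"

definition tmult :: "('a list \<Rightarrow> 'k::field) \<Rightarrow> ('a list \<Rightarrow> 'k) \<Rightarrow> ('a list \<Rightarrow> 'k)" where
  "tmult f g = (\<lambda>w. \<Sum>i\<le>length w. f (take i w) * g (drop i w))"

text \<open>The two-sided ideal R_B of T(V_+) generated by the defining relations of B(Gamma).\<close>
inductive_set BIdeal :: "'a set \<Rightarrow> ('a \<Rightarrow> 'a \<Rightarrow> bool) \<Rightarrow> ('a list \<Rightarrow> 'k::field) set"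
  for A :: "'a set" and le :: "'a \<Rightarrow> 'a \<Rightarrow> bool" where
  nonedge: "v \<in> Vplus A le \<Longrightarrow> w \<in> Vplus A le \<Longrightarrow> \<not> covers A le v w
             \<Longrightarrow> word [v, w] \<in> BIdeal A le"
| rel: "v \<in> A \<Longrightarrow> rk A le v \<ge> 2
             \<Longrightarrow> (\<lambda>u. \<Sum>w\<in>Sdown A le v. word [v, w] u) \<in> BIdeal A le"
| zero: "(\<lambda>_. 0) \<in> BIdeal A le"
| add: "x \<in> BIdeal A le \<Longrightarrow> y \<in> BIdeal A le \<Longrightarrow> tadd x y \<in> BIdeal A le"
| smult: "x \<in> BIdeal A le \<Longrightarrow> tsmult c x \<in> BIdeal A le"
| lmult: "x \<in> BIdeal A le \<Longrightarrow> set w \<subseteq> Vplus A le \<Longrightarrow> tmult (word w) x \<in> BIdeal A le"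
| rmult: "x \<in> BIdeal A le \<Longrightarrow> set w \<subseteq> Vplus A le \<Longrightarrow> tmult x (word w) \<in> BIdeal A le"

text \<open>congruence modulo R_B (equality in B(Gamma))\<close>
definition Beq :: "'a set \<Rightarrow> ('a \<Rightarrow> 'a \<Rightarrow> bool) \<Rightarrow> ('a list \<Rightarrow> 'k::field) \<Rightarrow> ('a list \<Rightarrow> 'k) \<Rightarrow> bool" where
  "Beq A le x y \<longleftrightarrow> (\<lambda>u. x u - y u) \<in> BIdeal A le"

definition homogeneous :: "'a set \<Rightarrow> ('a \<Rightarrow> 'a \<Rightarrow> bool) \<Rightarrow> nat \<Rightarrow> nat \<Rightarrow> ('a list \<Rightarrow> 'k::field) \<Rightarrow> bool" where
  "homogeneous A le m n x \<longleftrightarrow>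
     (\<forall>w. x w \<noteq> 0 \<longrightarrow> length w = m \<and> sum_list (map (rk A le) w) = n)"

text \<open>phi, acting on representatives, induces a doubly graded algebra isomorphism
  B(P) = T(V_+(P))/R_B(P) \<rightarrow> B(Q) = T(V_+(Q))/R_B(Q).\<close>
definition graded_iso ::
  "'a set \<Rightarrow> ('a \<Rightarrow> 'a \<Rightarrow> bool) \<Rightarrow> 'b set \<Rightarrow> ('b \<Rightarrow> 'b \<Rightarrow> bool)
    \<Rightarrow> (('a list \<Rightarrow> 'k::field) \<Rightarrow> ('b list \<Rightarrow> 'k)) \<Rightarrow> bool" where
  "graded_iso A le B le' \<phi> \<longleftrightarrow>
     (let TP = tensor_elems (Vplus A le); TQ = tensor_elems (Vplus B le') in
     (\<forall>x\<in>TP. \<phi> x \<in> TQ) \<and>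
     (\<forall>x\<in>TP. \<forall>y\<in>TP. Beq A le x y \<longrightarrow> Beq B le' (\<phi> x) (\<phi> y)) \<and>
     (\<forall>x\<in>TP. \<forall>y\<in>TP. Beq B le' (\<phi> (tadd x y)) (tadd (\<phi> x) (\<phi> y))) \<and>
     (\<forall>c. \<forall>x\<in>TP. Beq B le' (\<phi> (tsmult c x)) (tsmult c (\<phi> x))) \<and>
     (\<forall>x\<in>TP. \<forall>y\<in>TP. Beq B le' (\<phi> (tmult x y)) (tmult (\<phi> x) (\<phi> y))) \<and>
     Beq B le' (\<phi> (word [])) (word []) \<and>
     (\<forall>m n. \<forall>x\<in>TP. homogeneous A le m n x \<longrightarrow>
        (\<exists>y\<in>TQ. homogeneous B le' m n y \<and> Beq B le' (\<phi> x) y)) \<and>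
     (\<forall>x\<in>TP. \<forall>y\<in>TP. Beq B le' (\<phi> x) (\<phi> y) \<longrightarrow> Beq A le x y) \<and>
     (\<forall>z\<in>TQ. \<exists>x\<in>TP. Beq B le' (\<phi> x) z))"

definition B_equiv :: "'k::field itself \<Rightarrow> 'b set \<Rightarrow> ('b \<Rightarrow> 'b \<Rightarrow> bool) \<Rightarrow> 'a set \<Rightarrow> ('a \<Rightarrow> 'a \<Rightarrow> bool) \<Rightarrow> bool" where
  "B_equiv K B le' A le \<longleftrightarrow>
     (\<exists>\<phi> :: ('a list \<Rightarrow> 'k) \<Rightarrow> ('b list \<Rightarrow> 'k). graded_iso A le B le' \<phi>)"

end

theory Submission
  imports Defs
begin

text \<open>
  For \<open>n \<ge> 2\<close> and \<open>x\<close>, \<open>b\<close> in bidegrees \<open>(1, n)\<close> and \<open>(1, n - 1)\<close>, the product \<open>x b\<close> vanishes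
  in \<open>B\<close> exactly when \<open>b\<close> is constant on the lower covers of every vertex in the support of \<open>x\<close>.
  The isomorphism therefore induces linear isomorphisms \<open>\<psi>\<close> between the spaces of bidegree
  \<open>(1, n)\<close> that preserve this vanishing relation. In an atomic lattice every vertex of rank
  \<open>\<ge> 2\<close> covers two elements, and two such vertices sharing two lower covers are equal (both are
  their join); with this, the vanishing relation forces \<open>\<psi>\<close> to send each vertex \<open>v\<close> of rank
  \<open>\<ge> 2\<close> to a multiple of a single vertex \<open>f v\<close> of \<open>Q\<close>. The map \<open>f\<close> is a bijection
  \<open>P\<^sub>\<ge>\<^sub>2 \<rightarrow> Q\<^sub>\<ge>\<^sub>2\<close> preserving and reflecting coverings, hence an order isomorphism, as the
  order on \<open>P\<^sub>\<ge>\<^sub>2\<close> is generated by its coverings.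
\<close>

section \<open>The tensor algebra\<close>

lemma tmult_word_left:
  "tmult (word u) g w =
     (if take (length u) w = u \<and> length u \<le> length w then g (drop (length u) w) else 0)"
proof -
  have "tmult (word u) g w =
      (\<Sum>i\<le>length w. if i = length u then (if take i w = u then g (drop i w) else 0) else 0)"
    unfolding tmult_def word_def by (rule sum.cong) (auto simp: min_def split: if_splits)
  then show ?thesis by (simp only: sum.delta finite_atMost) auto
qed

lemma tmult_word_right:
  "tmult g (word u) w =
     (if length u \<le> length w \<and> drop (length w - length u) w = u
      then g (take (length w - length u) w) else 0)"
proof -
  have "tmult g (word u) w =
      (\<Sum>i\<le>length w. if i = length w - length u
         then (if length u \<le> length w \<and> drop i w = u then g (take i w) else 0) else 0)"
    unfolding tmult_def word_def by (rule sum.cong) auto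
  then show ?thesis by (simp only: sum.delta finite_atMost) auto
qed

lemma tmult_word_Nil_left [simp]: "tmult (word []) x = x"
  by (rule ext) (simp add: tmult_word_left)

lemma tmult_word_Nil_right [simp]: "tmult x (word []) = x"
  by (rule ext) (simp add: tmult_word_right)

lemma tsmult_one [simp]: "tsmult 1 x = x"
  by (simp add: tsmult_def)

lemma tmult_diff_left: "tmult (\<lambda>u. x u - x' u) y = (\<lambda>u. tmult x y u - tmult x' y u)"
  unfolding tmult_def by (auto simp: algebra_simps sum_subtractf)

lemma tmult_diff_right: "tmult x (\<lambda>u. y u - y' u) = (\<lambda>u. tmult x y u - tmult x y' u)"
  unfolding tmult_def by (auto simp: algebra_simps sum_subtractf)

lemma tmult_sum_left:
  "tmult (\<lambda>w. \<Sum>s\<in>S. c s * word s w) i = (\<lambda>u. \<Sum>s\<in>S. c s * tmult (word s) i u)"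
proof
  fix u
  have "tmult (\<lambda>w. \<Sum>s\<in>S. c s * word s w) i u =
      (\<Sum>k\<le>length u. \<Sum>s\<in>S. c s * word s (take k u) * i (drop k u))"
    unfolding tmult_def by (simp add: sum_distrib_right)
  also have "\<dots> = (\<Sum>s\<in>S. c s * tmult (word s) i u)"
    unfolding tmult_def by (subst sum.swap) (simp add: sum_distrib_left algebra_simps)
  finally show "tmult (\<lambda>w. \<Sum>s\<in>S. c s * word s w) i u = (\<Sum>s\<in>S. c s * tmult (word s) i u)" .
qed

lemma tmult_sum_right:
  "tmult i (\<lambda>w. \<Sum>s\<in>S. c s * word s w) = (\<lambda>u. \<Sum>s\<in>S. c s * tmult i (word s) u)"
proof
  fix u
  have "tmult i (\<lambda>w. \<Sum>s\<in>S. c s * word s w) u =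
      (\<Sum>k\<le>length u. \<Sum>s\<in>S. i (take k u) * (c s * word s (drop k u)))"
    unfolding tmult_def by (simp add: sum_distrib_left)
  also have "\<dots> = (\<Sum>s\<in>S. c s * tmult i (word s) u)"
    unfolding tmult_def by (subst sum.swap) (simp add: sum_distrib_left algebra_simps)
  finally show "tmult i (\<lambda>w. \<Sum>s\<in>S. c s * word s w) u = (\<Sum>s\<in>S. c s * tmult i (word s) u)" .
qed

lemma tensor_elems_zero: "(\<lambda>_. 0) \<in> tensor_elems V"
  by (simp add: tensor_elems_def)

lemma tensor_elems_word: "set w \<subseteq> V \<Longrightarrow> word w \<in> tensor_elems V"
  by (auto simp: tensor_elems_def word_def)

lemma tensor_elems_tadd:
  assumes x: "x \<in> tensor_elems V" and y: "y \<in> tensor_elems V"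
  shows "tadd x y \<in> tensor_elems V"
proof -
  have "{w. tadd x y w \<noteq> 0} \<subseteq> {w. x w \<noteq> 0} \<union> {w. y w \<noteq> 0}"
    by (auto simp: tadd_def)
  with x y show ?thesis
    unfolding tensor_elems_def by (auto intro: finite_subset simp: tadd_def)
qed

lemma tensor_elems_tsmult: "x \<in> tensor_elems V \<Longrightarrow> tsmult c x \<in> tensor_elems V"
  unfolding tensor_elems_def tsmult_def by (auto elim!: finite_subset[rotated])

lemma tensor_elems_tmult:
  assumes "x \<in> tensor_elems V" "y \<in> tensor_elems V"
  shows "tmult x y \<in> tensor_elems V"
proof -
  let ?S = "(\<lambda>(a, b). a @ b) ` ({w. x w \<noteq> 0} \<times> {w. y w \<noteq> 0})"
  have sub: "{w. tmult x y w \<noteq> 0} \<subseteq> ?S"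
  proof
    fix w assume "w \<in> {w. tmult x y w \<noteq> 0}"
    then obtain i where "x (take i w) * y (drop i w) \<noteq> 0"
      unfolding tmult_def by (auto elim: sum.not_neutral_contains_not_neutral)
    then show "w \<in> ?S" by (auto intro!: image_eqI[of _ _ "(take i w, drop i w)"])
  qed
  moreover have "finite ?S" using assms by (auto simp: tensor_elems_def)
  moreover have "set w \<subseteq> V" if "w \<in> ?S" for w
    using that assms by (fastforce simp: tensor_elems_def)
  ultimately show ?thesis unfolding tensor_elems_def by (auto intro: finite_subset)
qed

lemma tensor_elems_expansion:
  assumes "x \<in> tensor_elems V"
  shows "x = (\<lambda>w. \<Sum>s\<in>{w. x w \<noteq> 0}. x s * word s w)"
proof
  fix w
  have fin: "finite {w. x w \<noteq> 0}" using assms by (simp add: tensor_elems_def)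
  show "x w = (\<Sum>s\<in>{w. x w \<noteq> 0}. x s * word s w)"
  proof (cases "x w = 0")
    case True
    then have "\<forall>s\<in>{w. x w \<noteq> 0}. x s * word s w = 0" by (auto simp: word_def)
    then show ?thesis using True by simp
  next
    case False
    then show ?thesis using fin
      by (subst sum.remove[of _ w]) (auto simp: word_def split: if_splits intro!: sum.neutral)
  qed
qed

section \<open>The ideal of relations\<close>

lemma BIdeal_plus: "x \<in> BIdeal A le \<Longrightarrow> y \<in> BIdeal A le \<Longrightarrow> (\<lambda>u. x u + y u) \<in> BIdeal A le"
  using BIdeal.add[of x A le y] by (simp add: tadd_def)

lemma BIdeal_scale: "x \<in> BIdeal A le \<Longrightarrow> (\<lambda>u. c * x u) \<in> BIdeal A le"
  using BIdeal.smult[of x A le c] by (simp add: tsmult_def)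

lemma BIdeal_sum:
  assumes "finite F" "\<And>i. i \<in> F \<Longrightarrow> g i \<in> BIdeal A le"
  shows "(\<lambda>u. \<Sum>i\<in>F. g i u) \<in> BIdeal A le"
  using assms by (induction F rule: finite_induct) (auto intro: BIdeal.zero BIdeal_plus)

lemma BIdeal_tmult_right:
  assumes i: "i \<in> BIdeal A le" and y: "y \<in> tensor_elems (Vplus A le)"
  shows "tmult i y \<in> BIdeal A le"
proof -
  have "tmult i y = (\<lambda>u. \<Sum>s\<in>{w. y w \<noteq> 0}. y s * tmult i (word s) u)"
    by (subst tensor_elems_expansion[OF y]) (rule tmult_sum_right)
  also have "\<dots> \<in> BIdeal A le"
    using y by (intro BIdeal_sum BIdeal_scale BIdeal.rmult[OF i])
      (auto simp: tensor_elems_def)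
  finally show ?thesis .
qed

lemma BIdeal_tmult_left:
  assumes i: "i \<in> BIdeal A le" and y: "y \<in> tensor_elems (Vplus A le)"
  shows "tmult y i \<in> BIdeal A le"
proof -
  have "tmult y i = (\<lambda>u. \<Sum>s\<in>{w. y w \<noteq> 0}. y s * tmult (word s) i u)"
    by (subst tensor_elems_expansion[OF y]) (rule tmult_sum_left)
  also have "\<dots> \<in> BIdeal A le"
    using y by (intro BIdeal_sum BIdeal_scale BIdeal.lmult[OF i])
      (auto simp: tensor_elems_def)
  finally show ?thesis .
qed

lemma Beq_zero_iff: "Beq A le x (\<lambda>_. 0) \<longleftrightarrow> x \<in> BIdeal A le"
  by (simp add: Beq_def)

lemma Beq_sym: "Beq A le x y \<Longrightarrow> Beq A le y x"
  unfolding Beq_def using BIdeal_scale[of "\<lambda>u. x u - y u" A le "-1"] by simp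

lemma Beq_trans [trans]: "Beq A le x y \<Longrightarrow> Beq A le y z \<Longrightarrow> Beq A le x z"
  unfolding Beq_def using BIdeal_plus[of "\<lambda>u. x u - y u" A le "\<lambda>u. y u - z u"] by simp

lemma Beq_tadd: "Beq A le x x' \<Longrightarrow> Beq A le y y' \<Longrightarrow> Beq A le (tadd x y) (tadd x' y')"
  unfolding Beq_def tadd_def
  using BIdeal_plus[of "\<lambda>u. x u - x' u" A le "\<lambda>u. y u - y' u"] by (simp add: algebra_simps)

lemma Beq_tsmult: "Beq A le x y \<Longrightarrow> Beq A le (tsmult c x) (tsmult c y)"
  unfolding Beq_def tsmult_def using BIdeal_scale[of "\<lambda>u. x u - y u" A le c]
  by (simp add: algebra_simps)

lemma Beq_tmult:
  assumes "Beq A le x x'" "Beq A le y y'"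
    and "x' \<in> tensor_elems (Vplus A le)" "y \<in> tensor_elems (Vplus A le)"
  shows "Beq A le (tmult x y) (tmult x' y')"
proof -
  have "tmult (\<lambda>u. x u - x' u) y \<in> BIdeal A le"
    using assms by (intro BIdeal_tmult_right) (auto simp: Beq_def)
  moreover have "tmult x' (\<lambda>u. y u - y' u) \<in> BIdeal A le"
    using assms by (intro BIdeal_tmult_left) (auto simp: Beq_def)
  ultimately show ?thesis
    using BIdeal_plus by (fastforce simp: Beq_def tmult_diff_left tmult_diff_right)
qed

text \<open>An invariant of the generators of the ideal, visible on words of length at most two.\<close>

definition balanced_on_covers :: "'a set \<Rightarrow> ('a \<Rightarrow> 'a \<Rightarrow> bool) \<Rightarrow> ('a list \<Rightarrow> 'k::field) \<Rightarrow> bool"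
  where "balanced_on_covers A le x \<longleftrightarrow> (\<forall>w. length w < 2 \<longrightarrow> x w = 0) \<and>
     (\<forall>v s t. v \<in> A \<longrightarrow> rk A le v \<ge> 2 \<longrightarrow> s \<in> Sdown A le v \<longrightarrow> t \<in> Sdown A le v \<longrightarrow>
        x [v, s] = x [v, t])"

lemma balanced_on_coversI_short:
  "(\<And>w. length w \<le> 2 \<Longrightarrow> x w = 0) \<Longrightarrow> balanced_on_covers A le x"
  by (simp add: balanced_on_covers_def)

lemma balanced_on_covers_pointwise:
  assumes "balanced_on_covers A le x" "balanced_on_covers A le y" "h 0 0 = 0"
  shows "balanced_on_covers A le (\<lambda>w. h (x w) (y w))"
  using assms unfolding balanced_on_covers_def by metis

lemma sum_word_pair:
  "finite S \<Longrightarrow> (\<Sum>w\<in>S. word [v0, w] [v, s]) = (if v = v0 \<and> s \<in> S then (1::'k::field) else 0)"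
  by (cases "v = v0") (simp_all add: word_def sum.delta)

lemma BIdeal_balanced_on_covers:
  assumes "x \<in> BIdeal A le"
  shows "balanced_on_covers A le x"
  using assms
proof (induction rule: BIdeal.induct)
  case (nonedge v w)
  then have "[v', s] \<noteq> [v, w]" if "s \<in> Sdown A le v'" for v' s
    using that by (auto simp: Sdown_def)
  then show ?case
    unfolding balanced_on_covers_def word_def by auto
next
  case (rel v)
  show ?case
    unfolding balanced_on_covers_def
  proof (intro conjI allI impI)
    show "(\<Sum>w\<in>Sdown A le v. word [v, w] u) = 0" if "length u < 2" for u :: "'a list"
      using that by (auto simp: word_def intro!: sum.neutral)
    show "(\<Sum>w\<in>Sdown A le v. word [v, w] [v', s]) = (\<Sum>w\<in>Sdown A le v. word [v, w] [v', t])"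
      if "s \<in> Sdown A le v'" "t \<in> Sdown A le v'" for v' s t
      using that by (cases "finite (Sdown A le v)") (auto simp: sum_word_pair)
  qed
next
  case zero
  then show ?case by (simp add: balanced_on_covers_def)
next
  case (add x y)
  show ?case
    unfolding tadd_def by (rule balanced_on_covers_pointwise[OF add.IH]) simp
next
  case (smult x c)
  show ?case
    using balanced_on_covers_pointwise[OF smult.IH smult.IH, of "\<lambda>a _. c * a"]
    by (simp add: tsmult_def)
next
  case (lmult x w)
  show ?case
  proof (cases w)
    case Nil
    then show ?thesis using lmult.IH by simp
  next
    case (Cons a w')
    then show ?thesis
      using lmult.IH by (intro balanced_on_coversI_short)
        (auto simp: tmult_word_left balanced_on_covers_def)
  qed
next
  case (rmult x w)
  show ?case
  proof (cases w)
    case Nil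
    then show ?thesis using rmult.IH by simp
  next
    case (Cons a w')
    then show ?thesis
      using rmult.IH by (intro balanced_on_coversI_short)
        (auto simp: tmult_word_right balanced_on_covers_def)
  qed
qed

section \<open>Ranked posets\<close>

lemma is_poset_refl: "is_poset A le \<Longrightarrow> x \<in> A \<Longrightarrow> le x x"
  unfolding is_poset_def by blast

lemma is_poset_antisym:
  "is_poset A le \<Longrightarrow> x \<in> A \<Longrightarrow> y \<in> A \<Longrightarrow> le x y \<Longrightarrow> le y x \<Longrightarrow> x = y"
  unfolding is_poset_def by blast

lemma is_poset_trans:
  "is_poset A le \<Longrightarrow> x \<in> A \<Longrightarrow> y \<in> A \<Longrightarrow> z \<in> A \<Longrightarrow> le x y \<Longrightarrow> le y z \<Longrightarrow> le x z"
  unfolding is_poset_def by blast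

lemma rank_function_rk: "ranked A le \<Longrightarrow> rank_function A le (rk A le)"
  unfolding ranked_def rk_def by (metis someI_ex)

lemma rk_covers: "ranked A le \<Longrightarrow> covers A le p q \<Longrightarrow> rk A le p = Suc (rk A le q)"
  using rank_function_rk[of A le] unfolding rank_function_def covers_def by auto

lemma rk_eq_0_iff: "ranked A le \<Longrightarrow> x \<in> A \<Longrightarrow> rk A le x = 0 \<longleftrightarrow> minimal_el A le x"
  using rank_function_rk[of A le] unfolding rank_function_def by auto

lemma Sdown_subset: "Sdown A le p \<subseteq> A"
  by (auto simp: Sdown_def covers_def)

lemma Sdown_in_Vplus:
  assumes "ranked A le" "rk A le p \<ge> 2" "s \<in> Sdown A le p"
  shows "s \<in> Vplus A le" "rk A le s = rk A le p - 1"
  using rk_covers[OF assms(1), of p s] assms Sdown_subset[of A le p]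
  by (auto simp: Sdown_def Vplus_def)

lemma exists_lower_cover_above:
  assumes fin: "finite A" and po: "is_poset A le" and a: "a \<in> A" and u: "u \<in> A"
    and au: "le a u" "a \<noteq> u"
  obtains c where "covers A le u c" "le a c"
proof -
  let ?S = "{z\<in>A. le a z \<and> le z u \<and> z \<noteq> u}"
  let ?f = "\<lambda>c. card {t\<in>A. le t c}"
  have "finite ?S" "a \<in> ?S" using fin a au is_poset_refl[OF po a] by auto
  then have "Max (?f ` ?S) \<in> ?f ` ?S" by (intro Max_in) auto
  then obtain c where c: "c \<in> ?S" "?f c = Max (?f ` ?S)" by auto
  with \<open>finite ?S\<close> have cmax: "?f z \<le> ?f c" if "z \<in> ?S" for z
    using that by simp
  have "covers A le u c"
    unfolding covers_def
  proof (intro conjI)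
    show "u \<in> A" "c \<in> A" "le c u" "u \<noteq> c" using u c by auto
    show "\<not> (\<exists>z\<in>A. le c z \<and> le z u \<and> z \<noteq> c \<and> z \<noteq> u)"
    proof
      assume "\<exists>z\<in>A. le c z \<and> le z u \<and> z \<noteq> c \<and> z \<noteq> u"
      then obtain z where z: "z \<in> A" "le c z" "le z u" "z \<noteq> c" "z \<noteq> u" by blast
      have "z \<in> ?S" using z c is_poset_trans[OF po a _ z(1)] by blast
      have "{t\<in>A. le t c} \<subset> {t\<in>A. le t z}"
        using z c is_poset_trans[OF po _ _ z(1)] is_poset_refl[OF po z(1)]
          is_poset_antisym[OF po z(1)] by blast
      then have "?f c < ?f z" using fin by (simp add: psubset_card_mono)
      with cmax[OF \<open>z \<in> ?S\<close>] show False by simp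
    qed
  qed
  with c show thesis using that by blast
qed

lemma rk_mono:
  assumes fin: "finite A" and po: "is_poset A le" and rk: "ranked A le"
  shows "x \<in> A \<Longrightarrow> y \<in> A \<Longrightarrow> le x y \<Longrightarrow> rk A le x \<le> rk A le y"
proof (induction "rk A le y" arbitrary: y rule: less_induct)
  case less
  show ?case
  proof (cases "x = y")
    case False
    then obtain c where c: "covers A le y c" "le x c"
      using exists_lower_cover_above[OF fin po less.prems] by blast
    then have "c \<in> A" "rk A le y = Suc (rk A le c)"
      using rk_covers[OF rk] by (auto simp: covers_def)
    with less c show ?thesis by force
  qed simp
qed

definition covers_geq2 :: "'a set \<Rightarrow> ('a \<Rightarrow> 'a \<Rightarrow> bool) \<Rightarrow> 'a \<Rightarrow> 'a \<Rightarrow> bool" where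
  "covers_geq2 A le p q \<longleftrightarrow> covers A le p q \<and> p \<in> geq2 A le \<and> q \<in> geq2 A le"

text \<open>Every saturated chain between two elements of rank \<open>\<ge> 2\<close> stays in rank \<open>\<ge> 2\<close>.\<close>

lemma rtranclp_covers_geq2_if_le:
  assumes fin: "finite A" and po: "is_poset A le" and rk: "ranked A le"
  shows "x \<in> geq2 A le \<Longrightarrow> y \<in> A \<Longrightarrow> le x y \<Longrightarrow> (covers_geq2 A le)\<^sup>*\<^sup>* y x"
proof (induction "rk A le y" arbitrary: y rule: less_induct)
  case less
  then have x: "x \<in> A" by (simp add: geq2_def)
  show ?case
  proof (cases "x = y")
    case False
    then obtain c where c: "covers A le y c" "le x c"
      using exists_lower_cover_above[OF fin po x less.prems(2,3)] by blast
    then have cA: "c \<in> A" and ry: "rk A le y = Suc (rk A le c)"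
      using rk_covers[OF rk] by (auto simp: covers_def)
    have "rk A le x \<le> rk A le c" using rk_mono[OF fin po rk x cA c(2)] .
    with less.prems cA ry have "covers_geq2 A le y c"
      using c(1) by (auto simp: geq2_def covers_geq2_def)
    moreover have "(covers_geq2 A le)\<^sup>*\<^sup>* c x" using less cA c ry by simp
    ultimately show ?thesis by (rule converse_rtranclp_into_rtranclp)
  qed simp
qed

lemma le_if_rtranclp_covers_geq2:
  assumes po: "is_poset A le"
  shows "(covers_geq2 A le)\<^sup>*\<^sup>* y x \<Longrightarrow> y \<in> A \<Longrightarrow> le x y"
proof (induction rule: rtranclp_induct)
  case base
  then show ?case using is_poset_refl[OF po] by simp
next
  case (step z x)
  then have "le x z" "x \<in> A" "z \<in> A" "le z y"
    by (auto simp: covers_geq2_def covers_def)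
  then show ?case using is_poset_trans[OF po _ _ step.prems] by blast
qed

lemma le_iff_rtranclp_covers_geq2:
  assumes "finite A" "is_poset A le" "ranked A le" "x \<in> geq2 A le" "y \<in> geq2 A le"
  shows "le x y \<longleftrightarrow> (covers_geq2 A le)\<^sup>*\<^sup>* y x"
  using rtranclp_covers_geq2_if_le[OF assms(1-4)] le_if_rtranclp_covers_geq2[OF assms(2)] assms(5)
  by (auto simp: geq2_def)

lemma rtranclp_map:
  assumes "R\<^sup>*\<^sup>* x y" and "\<And>p q. R p q \<Longrightarrow> R' (f p) (f q)"
  shows "R'\<^sup>*\<^sup>* (f x) (f y)"
  using assms(1) by induction (auto intro: rtranclp.rtrancl_into_rtrancl assms(2))

lemma rtranclp_bij_betw_iff:
  assumes f: "bij_betw f S T"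
    and R: "\<And>p q. R p q \<Longrightarrow> p \<in> S \<and> q \<in> S"
    and R': "\<And>p q. R' p q \<Longrightarrow> p \<in> T \<and> q \<in> T"
    and hom: "\<And>p q. p \<in> S \<Longrightarrow> q \<in> S \<Longrightarrow> R p q \<longleftrightarrow> R' (f p) (f q)"
    and x: "x \<in> S" and y: "y \<in> S"
  shows "R\<^sup>*\<^sup>* x y \<longleftrightarrow> R'\<^sup>*\<^sup>* (f x) (f y)"
proof
  show "R\<^sup>*\<^sup>* x y \<Longrightarrow> R'\<^sup>*\<^sup>* (f x) (f y)"
    by (erule rtranclp_map) (use R hom in blast)
next
  let ?g = "inv_into S f"
  have g: "?g p \<in> S" "f (?g p) = p" if "p \<in> T" for p
    using that f by (auto simp: bij_betw_def intro: inv_into_into f_inv_into_f)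
  assume "R'\<^sup>*\<^sup>* (f x) (f y)"
  then have "R\<^sup>*\<^sup>* (?g (f x)) (?g (f y))"
    by (rule rtranclp_map) (metis R' g hom)
  then show "R\<^sup>*\<^sup>* x y"
    using f x y by (simp add: bij_betw_def)
qed

section \<open>Atomic lattices\<close>

text \<open>Two distinct lower covers of \<open>u\<close> have join \<open>u\<close>, so they determine \<open>u\<close>.\<close>

lemma lattice_eq_if_Sdown_subset:
  assumes lat: "is_lattice A le" and u: "u \<in> A" and v: "v \<in> A"
    and s12: "s1 \<in> Sdown A le u" "s2 \<in> Sdown A le u" "s1 \<noteq> s2"
    and sub: "Sdown A le u \<subseteq> Sdown A le v"
  shows "u = v"
proof -
  have c1: "covers A le u s1" "covers A le u s2"
    and c2: "covers A le v s1" "covers A le v s2" using s12 sub by (auto simp: Sdown_def)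
  then have sA: "s1 \<in> A" "s2 \<in> A" by (auto simp: covers_def)
  obtain j where j: "is_lub A le {s1, s2} j" using lat sA unfolding is_lattice_def by blast
  then have jA: "j \<in> A" and js: "le s1 j" "le s2 j" "le j u" "le j v"
    using c1 c2 u v by (auto simp: is_lub_def covers_def)
  have "j \<noteq> s1" using js c1 s12(3) unfolding covers_def by blast
  then have "j = u" "j = v" using c1(1) c2(1) jA js unfolding covers_def by blast+
  then show ?thesis by simp
qed

lemma atomic_lattice_two_lower_covers:
  assumes fin: "finite A" and lat: "is_lattice A le" and at: "atomic A le" and rk: "ranked A le"
    and v: "v \<in> A" "rk A le v \<ge> 2"
  obtains s t where "s \<in> Sdown A le v" "t \<in> Sdown A le v" "s \<noteq> t"
proof -
  have po: "is_poset A le" using lat by (simp add: is_lattice_def)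
  have "\<not> minimal_el A le v" using rk_eq_0_iff[OF rk v(1)] v(2) by simp
  then obtain y where "y \<in> A" "le y v" "y \<noteq> v" using v unfolding minimal_el_def by blast
  then obtain w where w: "covers A le v w" using exists_lower_cover_above[OF fin po _ v(1)] by blast
  then have wA: "w \<in> A" "\<not> le v w" using is_poset_antisym[OF po v(1)] by (auto simp: covers_def)
  have "\<exists>t\<in>Sdown A le v. t \<noteq> w"
  proof (rule ccontr)
    assume "\<not> ?thesis"
    then have onlyw: "c = w" if "covers A le v c" for c
      using that by (auto simp: Sdown_def)
    obtain S where S: "S \<subseteq> {a. atom A le a}" "is_lub A le S v"
      using at v unfolding atomic_def by blast
    have "le a w" if a: "a \<in> S" for a
    proof -
      obtain z where z: "z \<in> A" "\<forall>y\<in>A. le z y" "covers A le a z"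
        using S a unfolding atom_def by blast
      then have "minimal_el A le z" using is_poset_antisym[OF po] unfolding minimal_el_def by blast
      then have "rk A le a = 1" using rk_covers[OF rk z(3)] rk_eq_0_iff[OF rk z(1)] by simp
      then have "a \<noteq> v" using v(2) by auto
      moreover have "a \<in> A" "le a v" using z S a by (auto simp: covers_def is_lub_def)
      ultimately show ?thesis
        using exists_lower_cover_above[OF fin po _ v(1)] onlyw by metis
    qed
    then have "le v w" using S wA by (simp add: is_lub_def)
    with wA show False by simp
  qed
  with w that show thesis by (auto simp: Sdown_def)
qed

definition deg1 :: "'a set \<Rightarrow> ('a \<Rightarrow> 'a \<Rightarrow> bool) \<Rightarrow> nat \<Rightarrow> ('a list \<Rightarrow> 'k::field) \<Rightarrow> bool" where
  "deg1 A le n x \<longleftrightarrow> x \<in> tensor_elems (Vplus A le) \<and> homogeneous A le 1 n x"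

lemma deg1_nonzero:
  assumes "deg1 A le n x" "x w \<noteq> 0"
  obtains a where "w = [a]" "a \<in> Vplus A le" "rk A le a = n"
proof -
  have "length w = 1" "sum_list (map (rk A le) w) = n" "set w \<subseteq> Vplus A le"
    using assms by (auto simp: deg1_def homogeneous_def tensor_elems_def)
  then show thesis using that by (cases w) auto
qed

lemma deg1_nonzero_singleton:
  assumes "deg1 A le n x" "x [a] \<noteq> 0"
  shows "a \<in> A" "a \<in> Vplus A le" "rk A le a = n"
  using deg1_nonzero[OF assms] by (auto simp: Vplus_def)

lemma deg1_eq_0: "deg1 A le n x \<Longrightarrow> length w \<noteq> 1 \<Longrightarrow> x w = 0"
  by (metis deg1_nonzero length_Cons list.size(3) One_nat_def)

lemma deg1_eqI:
  assumes "deg1 A le n x" "deg1 A le n y" "\<And>a. x [a] = y [a]"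
  shows "x = y"
proof
  fix w show "x w = y w"
  proof (cases "length w = 1")
    case True
    then obtain a where "w = [a]" by (cases w) auto
    then show ?thesis using assms(3) by simp
  qed (simp add: deg1_eq_0[OF assms(1)] deg1_eq_0[OF assms(2)])
qed

lemma deg1_zero: "deg1 A le n (\<lambda>_. 0)"
  by (simp add: deg1_def homogeneous_def tensor_elems_zero)

lemma deg1_word: "a \<in> Vplus A le \<Longrightarrow> rk A le a = n \<Longrightarrow> deg1 A le n (word [a])"
  unfolding deg1_def using tensor_elems_word[of "[a]"] by (auto simp: homogeneous_def word_def)

lemma deg1_tadd: "deg1 A le n x \<Longrightarrow> deg1 A le n y \<Longrightarrow> deg1 A le n (tadd x y)"
  unfolding deg1_def homogeneous_def
  by (auto simp: tensor_elems_tadd) (metis add.right_neutral add_0 tadd_def)+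

lemma deg1_tsmult: "deg1 A le n x \<Longrightarrow> deg1 A le n (tsmult c x)"
  unfolding deg1_def homogeneous_def by (auto simp: tensor_elems_tsmult) (auto simp: tsmult_def)

lemma deg1_sum:
  "finite S \<Longrightarrow> (\<And>i. i \<in> S \<Longrightarrow> deg1 A le n (g i)) \<Longrightarrow> deg1 A le n (\<lambda>w. \<Sum>i\<in>S. g i w)"
proof (induction S rule: finite_induct)
  case (insert i S)
  then have "deg1 A le n (tadd (g i) (\<lambda>w. \<Sum>i\<in>S. g i w))" by (intro deg1_tadd) auto
  with insert show ?case by (simp add: tadd_def)
qed (simp add: deg1_zero)

lemma deg1_support_finite:
  assumes "deg1 A le n x"
  shows "finite {a. x [a] \<noteq> 0}"
proof -
  have "finite {w. x w \<noteq> 0}" using assms by (simp add: deg1_def tensor_elems_def)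
  then have "finite ((\<lambda>a. [a]) -` {w. x w \<noteq> 0})" by (rule finite_vimageI) (simp add: inj_def)
  then show ?thesis by simp
qed

lemma deg1_expansion:
  assumes "deg1 A le n x"
  shows "x = (\<lambda>w. \<Sum>a\<in>{a. x [a] \<noteq> 0}. tsmult (x [a]) (word [a]) w)"
proof (rule deg1_eqI[OF assms])
  show "deg1 A le n (\<lambda>w. \<Sum>a\<in>{a. x [a] \<noteq> 0}. tsmult (x [a]) (word [a]) w)"
    using deg1_support_finite[OF assms] deg1_nonzero_singleton[OF assms]
    by (intro deg1_sum deg1_tsmult deg1_word) auto
  fix a
  have "(\<Sum>b\<in>{a. x [a] \<noteq> 0}. tsmult (x [b]) (word [b]) [a]) =
      (\<Sum>b\<in>{a. x [a] \<noteq> 0}. if a = b then x [a] else 0)"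
    by (rule sum.cong) (auto simp: tsmult_def word_def)
  then show "x [a] = (\<Sum>b\<in>{a. x [a] \<noteq> 0}. tsmult (x [b]) (word [b]) [a])"
    using deg1_support_finite[OF assms] by simp
qed

lemma Beq_singleton_eq:
  assumes "Beq A le x y"
  shows "x [a] = y [a]"
  using BIdeal_balanced_on_covers[of "\<lambda>u. x u - y u"] assms
  by (force simp: Beq_def balanced_on_covers_def)

lemma deg1_eq_if_Beq: "deg1 A le n x \<Longrightarrow> deg1 A le n y \<Longrightarrow> Beq A le x y \<Longrightarrow> x = y"
  by (blast intro: deg1_eqI Beq_singleton_eq)

lemma tmult_deg1:
  assumes x: "deg1 A le n x" and b: "deg1 A le m b"
  shows "tmult x b = (\<lambda>w. if length w = 2 then x [w!0] * b [w!1] else 0)"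
proof
  fix w
  have zero_terms: "x (take i w) * b (drop i w) = 0"
    if "i \<le> length w" "length (take i w) \<noteq> 1 \<or> length (drop i w) \<noteq> 1" for i
    using that deg1_eq_0[OF x] deg1_eq_0[OF b] by (metis mult_zero_left mult_zero_right)
  then show "tmult x b w = (if length w = 2 then x [w!0] * b [w!1] else 0)"
  proof (cases "length w = 2")
    case True
    then obtain a c where w: "w = [a, c]"
      by (metis One_nat_def Suc_1 length_0_conv length_Suc_conv)
    have "tmult x b w = x [] * b [a, c] + x [a] * b [c] + x [a, c] * b []"
      unfolding tmult_def w by (simp add: numeral_2_eq_2 atMost_Suc)
    then show ?thesis using deg1_eq_0[OF x] deg1_eq_0[OF b] w by simp
  next
    case False
    then show ?thesis unfolding tmult_def by (auto intro!: sum.neutral zero_terms)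
  qed
qed

text \<open>The part on the lower covers of \<open>z\<close> is a multiple of the defining relation of \<open>z\<close>;
  every other word \<open>z s\<close> is a non-edge.\<close>

lemma BIdeal_row:
  assumes fin: "finite A" and z: "z \<in> A" "rk A le z \<ge> 2"
    and b: "\<And>s. b [s] \<noteq> 0 \<Longrightarrow> s \<in> Vplus A le"
    and const: "\<And>s t. s \<in> Sdown A le z \<Longrightarrow> t \<in> Sdown A le z \<Longrightarrow> b [s] = b [t]"
  shows "(\<lambda>u. \<Sum>s\<in>A. b [s] * word [z, s] u) \<in> BIdeal A le"
proof -
  let ?D = "Sdown A le z"
  have zV: "z \<in> Vplus A le" using z by (simp add: Vplus_def)
  have "(\<lambda>u. \<Sum>s\<in>?D. b [s] * word [z, s] u) \<in> BIdeal A le"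
  proof (cases "?D = {}")
    case False
    then obtain s0 where s0: "s0 \<in> ?D" by blast
    have "(\<lambda>u. b [s0] * (\<Sum>s\<in>?D. word [z, s] u)) \<in> BIdeal A le"
      using z by (intro BIdeal_scale BIdeal.rel)
    then show ?thesis using const[OF s0] by (simp add: sum_distrib_left)
  qed (simp add: BIdeal.zero)
  moreover have "(\<lambda>u. \<Sum>s\<in>A - ?D. b [s] * word [z, s] u) \<in> BIdeal A le"
  proof (rule BIdeal_sum)
    fix s assume s: "s \<in> A - ?D"
    show "(\<lambda>u. b [s] * word [z, s] u) \<in> BIdeal A le"
    proof (cases "b [s] = 0")
      case False
      with s show ?thesis
        using zV b by (intro BIdeal_scale BIdeal.nonedge) (auto simp: Sdown_def)
    qed (simp add: BIdeal.zero)
  qed (use fin in simp)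
  ultimately have "(\<lambda>u. (\<Sum>s\<in>A - ?D. b [s] * word [z, s] u) + (\<Sum>s\<in>?D. b [s] * word [z, s] u))
      \<in> BIdeal A le"
    by (intro BIdeal_plus)
  then show ?thesis by (simp only: sum.subset_diff[OF Sdown_subset[of A le z] fin])
qed

lemma tmult_deg1_expansion:
  assumes fin: "finite A" and x: "deg1 A le n x" and b: "deg1 A le m b"
  shows "tmult x b = (\<lambda>u. \<Sum>z\<in>A. x [z] * (\<Sum>s\<in>A. b [s] * word [z, s] u))"
proof
  fix u
  show "tmult x b u = (\<Sum>z\<in>A. x [z] * (\<Sum>s\<in>A. b [s] * word [z, s] u))"
  proof (cases "length u = 2")
    case True
    then obtain a c where u: "u = [a, c]"
      by (metis One_nat_def Suc_1 length_0_conv length_Suc_conv)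
    have "(\<Sum>z\<in>A. x [z] * (\<Sum>s\<in>A. b [s] * word [z, s] u)) =
        (\<Sum>z\<in>A. if z = a then (\<Sum>s\<in>A. if s = c then x [a] * b [c] else 0) else 0)"
      unfolding u word_def by (intro sum.cong refl) (auto simp: sum_distrib_left intro!: sum.cong)
    also have "\<dots> = x [a] * b [c]"
      using fin deg1_nonzero_singleton(1)[OF x, of a] deg1_nonzero_singleton(1)[OF b, of c]
      by (auto simp: sum.delta)
    finally show ?thesis by (simp add: tmult_deg1[OF x b] u)
  next
    case False
    then have "\<And>z s. u \<noteq> [z, s]" by auto
    with False show ?thesis by (simp add: tmult_deg1[OF x b] word_def)
  qed
qed

lemma deg1_tmult_in_BIdeal_iff:
  assumes fin: "finite A" and n: "n \<ge> 2"
    and x: "deg1 A le n x" and b: "deg1 A le m b"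
  shows "tmult x b \<in> BIdeal A le \<longleftrightarrow>
    (\<forall>z. x [z] \<noteq> 0 \<longrightarrow> (\<forall>s\<in>Sdown A le z. \<forall>t\<in>Sdown A le z. b [s] = b [t]))"
proof (intro iffI allI impI ballI)
  fix z s t assume I: "tmult x b \<in> BIdeal A le" and xz: "x [z] \<noteq> 0"
    and st: "s \<in> Sdown A le z" "t \<in> Sdown A le z"
  have "z \<in> A" "2 \<le> rk A le z" using deg1_nonzero_singleton[OF x xz] n by auto
  with BIdeal_balanced_on_covers[OF I] st have "tmult x b [z, s] = tmult x b [z, t]"
    unfolding balanced_on_covers_def by blast
  with xz show "b [s] = b [t]" by (simp add: tmult_deg1[OF x b])
next
  assume H: "\<forall>z. x [z] \<noteq> 0 \<longrightarrow> (\<forall>s\<in>Sdown A le z. \<forall>t\<in>Sdown A le z. b [s] = b [t])"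
  have "(\<lambda>u. x [z] * (\<Sum>s\<in>A. b [s] * word [z, s] u)) \<in> BIdeal A le" for z
  proof (cases "x [z] = 0")
    case False
    have "(\<lambda>u. \<Sum>s\<in>A. b [s] * word [z, s] u) \<in> BIdeal A le"
    proof (rule BIdeal_row[OF fin])
      show "z \<in> A" "2 \<le> rk A le z" using deg1_nonzero_singleton[OF x False] n by auto
      show "b [s] = b [t]" if "s \<in> Sdown A le z" "t \<in> Sdown A le z" for s t
        using H False that by blast
    qed (rule deg1_nonzero_singleton(2)[OF b])
    then show ?thesis by (rule BIdeal_scale)
  qed (simp add: BIdeal.zero)
  then show "tmult x b \<in> BIdeal A le"
    unfolding tmult_deg1_expansion[OF fin x b] by (intro BIdeal_sum fin)
qed

lemma scaled_word_tmult_in_BIdeal_iff: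
  assumes fin: "finite A" and z: "z \<in> A" "rk A le z = n" and n: "n \<ge> 2" and c: "c \<noteq> 0"
    and b: "deg1 A le m b"
  shows "tmult (tsmult c (word [z])) b \<in> BIdeal A le \<longleftrightarrow>
    (\<forall>s\<in>Sdown A le z. \<forall>t\<in>Sdown A le z. b [s] = b [t])"
proof -
  have x: "deg1 A le n (tsmult c (word [z]))"
    using z n by (intro deg1_tsmult deg1_word) (auto simp: Vplus_def)
  have support: "tsmult c (word [z]) [z'] = 0 \<longleftrightarrow> z' \<noteq> z" for z'
    using c by (simp add: tsmult_def word_def)
  show ?thesis
    unfolding deg1_tmult_in_BIdeal_iff[OF fin n x b] support by blast
qed

lemma word_tmult_in_BIdeal_if_tmult:
  assumes fin: "finite A" and n: "n \<ge> 2" and x: "deg1 A le n x" and b: "deg1 A le m b"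
    and I: "tmult x b \<in> BIdeal A le" and xz: "x [z] \<noteq> 0"
  shows "tmult (word [z]) b \<in> BIdeal A le"
proof -
  have "z \<in> A" "rk A le z = n" using deg1_nonzero_singleton[OF x xz] by auto
  from scaled_word_tmult_in_BIdeal_iff[OF fin this n one_neq_zero b]
  have "tmult (word [z]) b \<in> BIdeal A le \<longleftrightarrow>
      (\<forall>s\<in>Sdown A le z. \<forall>t\<in>Sdown A le z. b [s] = b [t])"
    by (simp only: tsmult_one)
  with I xz show ?thesis unfolding deg1_tmult_in_BIdeal_iff[OF fin n x b] by blast
qed

lemma scaled_words_tmult_in_BIdeal_iff:
  assumes fin: "finite A" and n: "n \<ge> 2" and c: "c \<noteq> 0" and d: "d \<noteq> 0"
    and z: "z \<in> A" "rk A le z = n" and w: "w \<in> A" "rk A le w = n - 1"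
    and two: "p \<in> Sdown A le z" "q \<in> Sdown A le z" "p \<noteq> q"
  shows "tmult (tsmult c (word [z])) (tsmult d (word [w])) \<in> BIdeal A le \<longleftrightarrow> \<not> covers A le z w"
proof -
  have b: "deg1 A le (n - 1) (tsmult d (word [w]))"
    using w n by (intro deg1_tsmult deg1_word) (auto simp: Vplus_def)
  have "(\<forall>s\<in>Sdown A le z. \<forall>t\<in>Sdown A le z. tsmult d (word [w]) [s] = tsmult d (word [w]) [t])
      \<longleftrightarrow> w \<notin> Sdown A le z"
    using two d by (auto simp: tsmult_def word_def)
  then show ?thesis
    by (simp add: scaled_word_tmult_in_BIdeal_iff[OF fin z n c b] Sdown_def)
qed

section \<open>The isomorphism in bidegree \<open>(1, n)\<close>\<close>

definition deg1_component :: "'a set \<Rightarrow> ('a \<Rightarrow> 'a \<Rightarrow> bool) \<Rightarrow> nat \<Rightarrow> ('a list \<Rightarrow> 'k) \<Rightarrow> ('a list \<Rightarrow> 'k::field)"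
  where "deg1_component A le n x = (\<lambda>w. if length w = 1 \<and> rk A le (hd w) = n then x w else 0)"

lemma deg1_deg1_component:
  assumes x: "x \<in> tensor_elems (Vplus A le)"
  shows "deg1 A le n (deg1_component A le n x)"
  unfolding deg1_def
proof
  have "{w. deg1_component A le n x w \<noteq> 0} \<subseteq> {w. x w \<noteq> 0}"
    by (auto simp: deg1_component_def)
  with x show "deg1_component A le n x \<in> tensor_elems (Vplus A le)"
    unfolding tensor_elems_def by (auto intro: finite_subset simp: deg1_component_def)
  show "homogeneous A le 1 n (deg1_component A le n x)"
    unfolding homogeneous_def deg1_component_def by (auto simp: length_Suc_conv)
qed

locale B_iso =
  fixes A :: "'a set" and le :: "'a \<Rightarrow> 'a \<Rightarrow> bool"
    and B :: "'b set" and le' :: "'b \<Rightarrow> 'b \<Rightarrow> bool"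
    and \<phi> :: "('a list \<Rightarrow> 'k::field) \<Rightarrow> ('b list \<Rightarrow> 'k)"
  assumes graded_iso: "graded_iso A le B le' \<phi>"
    and finA: "finite A" and finB: "finite B"
    and rkA: "ranked A le" and rkB: "ranked B le'"
begin

abbreviation "TP \<equiv> tensor_elems (Vplus A le) :: ('a list \<Rightarrow> 'k) set"
abbreviation "TQ \<equiv> tensor_elems (Vplus B le') :: ('b list \<Rightarrow> 'k) set"

lemma phi_in_TQ: "x \<in> TP \<Longrightarrow> \<phi> x \<in> TQ"
  and phi_cong: "x \<in> TP \<Longrightarrow> y \<in> TP \<Longrightarrow> Beq A le x y \<Longrightarrow> Beq B le' (\<phi> x) (\<phi> y)"
  and phi_tadd: "x \<in> TP \<Longrightarrow> y \<in> TP \<Longrightarrow> Beq B le' (\<phi> (tadd x y)) (tadd (\<phi> x) (\<phi> y))"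
  and phi_tsmult: "x \<in> TP \<Longrightarrow> Beq B le' (\<phi> (tsmult c x)) (tsmult c (\<phi> x))"
  and phi_tmult: "x \<in> TP \<Longrightarrow> y \<in> TP \<Longrightarrow> Beq B le' (\<phi> (tmult x y)) (tmult (\<phi> x) (\<phi> y))"
  and phi_homogeneous: "x \<in> TP \<Longrightarrow> homogeneous A le m n x \<Longrightarrow>
    \<exists>y\<in>TQ. homogeneous B le' m n y \<and> Beq B le' (\<phi> x) y"
  and phi_reflects: "x \<in> TP \<Longrightarrow> y \<in> TP \<Longrightarrow> Beq B le' (\<phi> x) (\<phi> y) \<Longrightarrow> Beq A le x y"
  and phi_onto: "z \<in> TQ \<Longrightarrow> \<exists>x\<in>TP. Beq B le' (\<phi> x) z"
  using graded_iso by (simp_all add: graded_iso_def Let_def)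

lemma phi_zero: "Beq B le' (\<phi> (\<lambda>_. 0)) (\<lambda>_. 0)"
proof -
  have "Beq B le' (\<phi> (tadd (\<lambda>_. 0) (\<lambda>_. 0))) (tadd (\<phi> (\<lambda>_. 0)) (\<phi> (\<lambda>_. 0)))"
    by (rule phi_tadd) (simp_all add: tensor_elems_zero)
  then have "(\<lambda>u. - \<phi> (\<lambda>_. 0) u) \<in> BIdeal B le'"
    by (simp add: tadd_def Beq_def)
  from BIdeal_scale[OF this, of "-1"] show ?thesis by (simp add: Beq_def)
qed

text \<open>Since the ideal meets bidegree \<open>(1, n)\<close> only in \<open>0\<close>, the class of \<open>\<phi> x\<close> has a unique
  representative of bidegree \<open>(1, n)\<close>.\<close>

definition \<psi> :: "nat \<Rightarrow> ('a list \<Rightarrow> 'k) \<Rightarrow> ('b list \<Rightarrow> 'k)" where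
  "\<psi> n x = (SOME y. deg1 B le' n y \<and> Beq B le' (\<phi> x) y)"

lemma deg1_psi: "deg1 A le n x \<Longrightarrow> deg1 B le' n (\<psi> n x)"
  and phi_Beq_psi: "deg1 A le n x \<Longrightarrow> Beq B le' (\<phi> x) (\<psi> n x)"
proof -
  assume "deg1 A le n x"
  then have "\<exists>y. deg1 B le' n y \<and> Beq B le' (\<phi> x) y"
    using phi_homogeneous[of x 1 n] by (auto simp: deg1_def)
  then have "deg1 B le' n (\<psi> n x) \<and> Beq B le' (\<phi> x) (\<psi> n x)"
    unfolding \<psi>_def by (rule someI_ex)
  then show "deg1 B le' n (\<psi> n x)" "Beq B le' (\<phi> x) (\<psi> n x)" by auto
qed

lemma deg1_in_TP: "deg1 A le n x \<Longrightarrow> x \<in> TP"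
  and deg1_in_TQ: "deg1 B le' n y \<Longrightarrow> y \<in> TQ"
  by (simp_all add: deg1_def)

lemma psi_tadd:
  assumes x: "deg1 A le n x" and y: "deg1 A le n y"
  shows "\<psi> n (tadd x y) = tadd (\<psi> n x) (\<psi> n y)"
proof (rule deg1_eq_if_Beq)
  show "deg1 B le' n (\<psi> n (tadd x y))" "deg1 B le' n (tadd (\<psi> n x) (\<psi> n y))"
    using x y by (simp_all add: deg1_psi deg1_tadd)
  have "Beq B le' (\<psi> n (tadd x y)) (\<phi> (tadd x y))"
    using x y by (intro Beq_sym[OF phi_Beq_psi] deg1_tadd)
  also have "Beq B le' \<dots> (tadd (\<phi> x) (\<phi> y))"
    using x y by (intro phi_tadd deg1_in_TP)
  also have "Beq B le' \<dots> (tadd (\<psi> n x) (\<psi> n y))"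
    using x y by (intro Beq_tadd phi_Beq_psi)
  finally show "Beq B le' (\<psi> n (tadd x y)) (tadd (\<psi> n x) (\<psi> n y))" .
qed

lemma psi_tsmult:
  assumes x: "deg1 A le n x"
  shows "\<psi> n (tsmult c x) = tsmult c (\<psi> n x)"
proof (rule deg1_eq_if_Beq)
  show "deg1 B le' n (\<psi> n (tsmult c x))" "deg1 B le' n (tsmult c (\<psi> n x))"
    using x by (simp_all add: deg1_psi deg1_tsmult)
  have "Beq B le' (\<psi> n (tsmult c x)) (\<phi> (tsmult c x))"
    using x by (intro Beq_sym[OF phi_Beq_psi] deg1_tsmult)
  also have "Beq B le' \<dots> (tsmult c (\<phi> x))"
    using x by (intro phi_tsmult deg1_in_TP)
  also have "Beq B le' \<dots> (tsmult c (\<psi> n x))"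
    using x by (intro Beq_tsmult phi_Beq_psi)
  finally show "Beq B le' (\<psi> n (tsmult c x)) (tsmult c (\<psi> n x))" .
qed

lemma psi_zero: "\<psi> n (\<lambda>_. 0) = (\<lambda>_. 0)"
  using psi_tsmult[OF deg1_zero, of n 0] by (simp add: tsmult_def)

lemma psi_sum:
  "finite S \<Longrightarrow> (\<And>i. i \<in> S \<Longrightarrow> deg1 A le n (g i)) \<Longrightarrow>
    \<psi> n (\<lambda>w. \<Sum>i\<in>S. g i w) = (\<lambda>w. \<Sum>i\<in>S. \<psi> n (g i) w)"
proof (induction S rule: finite_induct)
  case (insert i S)
  then have "\<psi> n (tadd (g i) (\<lambda>w. \<Sum>i\<in>S. g i w)) = tadd (\<psi> n (g i)) (\<psi> n (\<lambda>w. \<Sum>i\<in>S. g i w))"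
    by (intro psi_tadd deg1_sum) auto
  with insert show ?case by (simp add: tadd_def)
qed (simp add: psi_zero)

lemma psi_deg1_expansion:
  assumes x: "deg1 A le n x"
  shows "\<psi> n x = (\<lambda>w. \<Sum>a\<in>{a. x [a] \<noteq> 0}. x [a] * \<psi> n (word [a]) w)"
proof -
  have words: "deg1 A le n (word [a])" if "a \<in> {a. x [a] \<noteq> 0}" for a
    using deg1_nonzero_singleton[OF x] that by (intro deg1_word) auto
  have "\<psi> n x = \<psi> n (\<lambda>w. \<Sum>a\<in>{a. x [a] \<noteq> 0}. tsmult (x [a]) (word [a]) w)"
    by (rule arg_cong[OF deg1_expansion[OF x]])
  also have "\<dots> = (\<lambda>w. \<Sum>a\<in>{a. x [a] \<noteq> 0}. \<psi> n (tsmult (x [a]) (word [a])) w)"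
    using words by (intro psi_sum deg1_support_finite[OF x] deg1_tsmult)
  also have "\<dots> = (\<lambda>w. \<Sum>a\<in>{a. x [a] \<noteq> 0}. x [a] * \<psi> n (word [a]) w)"
    using psi_tsmult[OF words] by (intro ext sum.cong) (simp_all add: tsmult_def)
  finally show ?thesis .
qed

lemma psi_inj:
  assumes x: "deg1 A le n x" and y: "deg1 A le n y" and eq: "\<psi> n x = \<psi> n y"
  shows "x = y"
proof (rule deg1_eq_if_Beq[OF x y])
  have "Beq B le' (\<phi> x) (\<psi> n y)" using phi_Beq_psi[OF x] by (simp add: eq)
  also have "Beq B le' \<dots> (\<phi> y)" by (rule Beq_sym[OF phi_Beq_psi[OF y]])
  finally show "Beq A le x y" using x y by (intro phi_reflects deg1_in_TP)
qed

lemma psi_tmult_in_BIdeal_iff: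
  assumes x: "deg1 A le n x" and y: "deg1 A le m y"
  shows "tmult x y \<in> BIdeal A le \<longleftrightarrow> tmult (\<psi> n x) (\<psi> m y) \<in> BIdeal B le'"
proof -
  have xy: "tmult x y \<in> TP" using x y by (intro tensor_elems_tmult deg1_in_TP)
  have "Beq B le' (\<phi> (tmult x y)) (tmult (\<phi> x) (\<phi> y))"
    using x y by (intro phi_tmult deg1_in_TP)
  also have "Beq B le' \<dots> (tmult (\<psi> n x) (\<psi> m y))"
    using x y by (intro Beq_tmult phi_Beq_psi deg1_in_TQ[OF deg1_psi] phi_in_TQ deg1_in_TP)
  finally have prod: "Beq B le' (\<phi> (tmult x y)) (tmult (\<psi> n x) (\<psi> m y))" .
  have "tmult x y \<in> BIdeal A le \<longleftrightarrow> Beq B le' (\<phi> (tmult x y)) (\<phi> (\<lambda>_. 0))"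
    using phi_cong[OF xy tensor_elems_zero] phi_reflects[OF xy tensor_elems_zero]
    by (auto simp: Beq_zero_iff)
  also have "\<dots> \<longleftrightarrow> Beq B le' (tmult (\<psi> n x) (\<psi> m y)) (\<lambda>_. 0)"
    using prod phi_zero by (meson Beq_sym Beq_trans)
  finally show ?thesis by (simp add: Beq_zero_iff)
qed

lemma phi_word_no_deg1_component:
  assumes w: "set w \<subseteq> Vplus A le" and not_vertex: "\<And>a. w = [a] \<Longrightarrow> rk A le a \<noteq> n"
  obtains y where "y \<in> TQ" "Beq B le' (\<phi> (tsmult c (word w))) y" "\<And>u. rk B le' u = n \<Longrightarrow> y [u] = 0"
proof -
  have "tsmult c (word w) \<in> TP" using w by (intro tensor_elems_tsmult tensor_elems_word)
  moreover have "homogeneous A le (length w) (sum_list (map (rk A le) w)) (tsmult c (word w))"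
    by (auto simp: homogeneous_def tsmult_def word_def)
  ultimately obtain y where y: "y \<in> TQ" "Beq B le' (\<phi> (tsmult c (word w))) y"
    and hom: "homogeneous B le' (length w) (sum_list (map (rk A le) w)) y"
    using phi_homogeneous by blast
  have "y [u] = 0" if "rk B le' u = n" for u
  proof (rule ccontr)
    assume "y [u] \<noteq> 0"
    with hom that have "length w = 1" "sum_list (map (rk A le) w) = n"
      unfolding homogeneous_def by force+
    with not_vertex show False by (cases w) auto
  qed
  with y that show thesis by blast
qed

lemma phi_no_deg1_component:
  assumes x: "x \<in> TP" and no_deg1: "\<And>a. rk A le a = n \<Longrightarrow> x [a] = 0"
  obtains y where "y \<in> TQ" "Beq B le' (\<phi> x) y" "\<And>u. rk B le' u = n \<Longrightarrow> y [u] = 0"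
proof -
  have "finite S \<Longrightarrow> \<forall>x\<in>TP. {w. x w \<noteq> 0} \<subseteq> S \<longrightarrow> (\<forall>a. rk A le a = n \<longrightarrow> x [a] = 0) \<longrightarrow>
      (\<exists>y\<in>TQ. Beq B le' (\<phi> x) y \<and> (\<forall>u. rk B le' u = n \<longrightarrow> y [u] = 0))" for S
  proof (induction S rule: finite_induct)
    case empty
    show ?case using phi_zero tensor_elems_zero by fastforce
  next
    case (insert w S)
    show ?case
    proof (intro ballI impI)
      fix x assume x: "x \<in> TP" and xS: "{w. x w \<noteq> 0} \<subseteq> insert w S"
        and no_deg1: "\<forall>a. rk A le a = n \<longrightarrow> x [a] = 0"
      define x1 where "x1 = (\<lambda>u. if u = w then 0 else x u)"
      have x1: "x1 \<in> TP" using x unfolding x1_def tensor_elems_def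
        by (auto intro: finite_subset[of _ "{w. x w \<noteq> 0}"])
      moreover have "{u. x1 u \<noteq> 0} \<subseteq> S" "\<forall>a. rk A le a = n \<longrightarrow> x1 [a] = 0"
        using xS no_deg1 by (auto simp: x1_def)
      ultimately obtain y1 where y1: "y1 \<in> TQ" "Beq B le' (\<phi> x1) y1"
        "\<forall>u. rk B le' u = n \<longrightarrow> y1 [u] = 0"
        using insert.IH by blast
      show "\<exists>y\<in>TQ. Beq B le' (\<phi> x) y \<and> (\<forall>u. rk B le' u = n \<longrightarrow> y [u] = 0)"
      proof (cases "x w = 0")
        case True
        then have "x1 = x" by (auto simp: x1_def)
        with y1 show ?thesis by blast
      next
        case False
        with x no_deg1 have w: "set w \<subseteq> Vplus A le" "\<And>a. w = [a] \<Longrightarrow> rk A le a \<noteq> n"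
          by (auto simp: tensor_elems_def)
        obtain y2 where y2: "y2 \<in> TQ" "Beq B le' (\<phi> (tsmult (x w) (word w))) y2"
          "\<And>u. rk B le' u = n \<Longrightarrow> y2 [u] = 0"
          using phi_word_no_deg1_component[OF w, where c = "x w"] by blast
        have "x = tadd x1 (tsmult (x w) (word w))"
          by (auto simp: tadd_def x1_def tsmult_def word_def)
        then have "Beq B le' (\<phi> x) (tadd y1 y2)"
          using phi_tadd[OF x1 tensor_elems_tsmult[OF tensor_elems_word]] Beq_tadd[OF y1(2) y2(2)]
            w(1) by (metis Beq_trans)
        with y1 y2 tensor_elems_tadd[OF y1(1) y2(1)] show ?thesis
          by (intro bexI[of _ "tadd y1 y2"]) (auto simp: tadd_def)
      qed
    qed
  qed
  moreover have "finite {w. x w \<noteq> 0}" using x by (simp add: tensor_elems_def)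
  ultimately show thesis using that x no_deg1 by blast
qed

lemma psi_surj:
  assumes z: "deg1 B le' n z"
  obtains x where "deg1 A le n x" "\<psi> n x = z"
proof -
  obtain x0 where x0: "x0 \<in> TP" "Beq B le' (\<phi> x0) z" using phi_onto[OF deg1_in_TQ[OF z]] by blast
  define p where "p = deg1_component A le n x0"
  define r where "r = tadd x0 (tsmult (-1) p)"
  have p: "deg1 A le n p" unfolding p_def by (rule deg1_deg1_component[OF x0(1)])
  have r: "r \<in> TP"
    unfolding r_def by (intro tensor_elems_tadd x0(1) tensor_elems_tsmult deg1_in_TP[OF p])
  have "r [a] = 0" if "rk A le a = n" for a
    using that by (simp add: r_def p_def tadd_def tsmult_def deg1_component_def)
  then obtain y where y: "y \<in> TQ" "Beq B le' (\<phi> r) y" "\<And>u. rk B le' u = n \<Longrightarrow> y [u] = 0"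
    using phi_no_deg1_component[OF r] by blast
  have "x0 = tadd p r" by (simp add: r_def tadd_def tsmult_def)
  then have "Beq B le' z (tadd (\<psi> n p) y)"
    using x0(2) phi_tadd[OF deg1_in_TP[OF p] r] Beq_tadd[OF phi_Beq_psi[OF p] y(2)]
    by (metis Beq_sym Beq_trans)
  then have "z [u] = \<psi> n p [u] + y [u]" for u
    by (auto dest: Beq_singleton_eq simp: tadd_def)
  then have "z = \<psi> n p"
    using y(3) deg1_nonzero_singleton(3)[OF z] deg1_nonzero_singleton(3)[OF deg1_psi[OF p]]
    by (intro deg1_eqI[OF z deg1_psi[OF p]]) (metis add.right_neutral)
  with p that show thesis by blast
qed

end

section \<open>The induced map on vertices\<close>

locale B_iso_atomic = B_iso A le B le' \<phi>
  for A :: "'a set" and le and B :: "'b set" and le'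
    and \<phi> :: "('a list \<Rightarrow> 'k::field) \<Rightarrow> ('b list \<Rightarrow> 'k)" +
  assumes latA: "is_lattice A le" and atA: "atomic A le" and poB: "is_poset B le'"
begin

text \<open>Atomicity enters here: a vertex \<open>z \<noteq> v\<close> has a lower cover \<open>s\<close> that is not one of \<open>v\<close>,
  so \<open>v s\<close> vanishes in \<open>B(P)\<close> while \<open>z s\<close> does not.\<close>

lemma psi_preimage_of_word_support:
  assumes v: "v \<in> A" "rk A le v = n" and n: "n \<ge> 2"
    and u: "\<psi> n (word [v]) [u] \<noteq> 0"
    and x: "deg1 A le n x" "\<psi> n x = word [u]" and xz: "x [z] \<noteq> 0"
  shows "z = v"
proof (rule ccontr)
  assume "z \<noteq> v"
  have vv: "deg1 A le n (word [v] :: 'a list \<Rightarrow> 'k::field)"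
    using v n by (intro deg1_word) (auto simp: Vplus_def)
  have z: "z \<in> A" "rk A le z = n" using deg1_nonzero_singleton[OF x(1) xz] by auto
  obtain s0 t0 where st0: "s0 \<in> Sdown A le z" "t0 \<in> Sdown A le z" "s0 \<noteq> t0"
    using atomic_lattice_two_lower_covers[OF finA latA atA rkA z(1)] z n by auto
  then obtain s where s: "s \<in> Sdown A le z" "s \<notin> Sdown A le v"
    using lattice_eq_if_Sdown_subset[OF latA z(1) v(1)] \<open>z \<noteq> v\<close> by blast
  obtain t where t: "t \<in> Sdown A le z" "t \<noteq> s" using st0 by blast
  have ss: "deg1 A le (n - 1) (word [s] :: 'a list \<Rightarrow> 'k::field)"
    using Sdown_in_Vplus[OF rkA _ s(1)] z n by (intro deg1_word) auto
  let ?b = "\<psi> (n - 1) (word [s])"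
  have word_iff: "tmult (word [a]) (word [s] :: 'a list \<Rightarrow> 'k::field) \<in> BIdeal A le \<longleftrightarrow>
      (\<forall>p\<in>Sdown A le a. \<forall>q\<in>Sdown A le a. word [s] [p] = (word [s] [q] :: 'k::field))"
    if "a \<in> A" "rk A le a = n" for a
    using scaled_word_tmult_in_BIdeal_iff[OF finA that n one_neq_zero ss] by simp
  have "\<forall>p\<in>Sdown A le v. \<forall>q\<in>Sdown A le v. word [s] [p] = (word [s] [q] :: 'k::field)"
    using s(2) by (auto simp: word_def)
  then have "tmult (word [v]) (word [s] :: 'a list \<Rightarrow> 'k::field) \<in> BIdeal A le"
    using word_iff[OF v] by blast
  then have "tmult (\<psi> n (word [v])) ?b \<in> BIdeal B le'"
    using psi_tmult_in_BIdeal_iff[OF vv ss] by blast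
  then have "tmult (word [u]) ?b \<in> BIdeal B le'"
    by (rule word_tmult_in_BIdeal_if_tmult[OF finB n deg1_psi[OF vv] deg1_psi[OF ss] _ u])
  then have "tmult x (word [s]) \<in> BIdeal A le"
    using psi_tmult_in_BIdeal_iff[OF x(1) ss] x(2) by simp
  note zs = word_tmult_in_BIdeal_if_tmult[OF finA n x(1) ss this xz]
  from bspec[OF bspec[OF word_iff[OF z, THEN iffD1, OF zs] s(1)] t(1)] t(2)
  show False by (simp add: word_def)
qed

lemma psi_word_scaled_word:
  assumes v: "v \<in> geq2 A le"
  shows "\<exists>u c. c \<noteq> 0 \<and> u \<in> B \<and> rk B le' u = rk A le v \<and>
    \<psi> (rk A le v) (word [v]) = tsmult c (word [u])"
proof -
  define n where "n = rk A le v"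
  have vA: "v \<in> A" and n: "n \<ge> 2" using v by (auto simp: geq2_def n_def)
  have vv: "deg1 A le n (word [v])" using vA n by (intro deg1_word) (auto simp: Vplus_def n_def)
  define y where "y = \<psi> n (word [v])"
  have y: "deg1 B le' n y" unfolding y_def by (rule deg1_psi[OF vv])
  have "y \<noteq> (\<lambda>_. 0)"
    using psi_inj[OF vv deg1_zero] psi_zero fun_cong[of "word [v]" "\<lambda>_. 0" "[v]"]
    by (auto simp: y_def word_def)
  then obtain w where "y w \<noteq> 0" by auto
  with y obtain u where u: "y [u] \<noteq> 0" "u \<in> Vplus B le'" "rk B le' u = n"
    by (metis deg1_nonzero)
  then obtain x where x: "deg1 A le n x" "\<psi> n x = word [u]"
    using psi_surj[OF deg1_word] by metis
  have "x = tsmult (x [v]) (word [v])"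
    using psi_preimage_of_word_support[OF vA n_def[symmetric] n, of u x] u(1) x
    by (intro deg1_eqI[OF x(1) deg1_tsmult[OF vv]]) (auto simp: y_def tsmult_def word_def)
  then have "word [u] = \<psi> n (tsmult (x [v]) (word [v]))"
    using x(2) by simp
  also have "\<dots> = tsmult (x [v]) y"
    unfolding y_def by (rule psi_tsmult[OF vv])
  finally have wu: "word [u] = tsmult (x [v]) y" .
  have "x [v] \<noteq> 0"
  proof
    assume "x [v] = 0"
    with fun_cong[OF wu, of "[u]"] show False by (simp add: tsmult_def word_def)
  qed
  moreover note wu
  ultimately have "y = tsmult (inverse (x [v])) (word [u])"
    by (auto simp: tsmult_def)
  with \<open>x [v] \<noteq> 0\<close> u show ?thesis
    unfolding y_def n_def by (intro exI[of _ u] exI[of _ "inverse (x [v])"]) (auto simp: Vplus_def)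
qed

definition vertex_map :: "'a \<Rightarrow> 'b" where
  "vertex_map v = (SOME u. \<exists>c. c \<noteq> 0 \<and> u \<in> B \<and> rk B le' u = rk A le v \<and>
     \<psi> (rk A le v) (word [v]) = tsmult c (word [u]))"

lemma vertex_map:
  assumes "v \<in> geq2 A le"
  shows "vertex_map v \<in> B" "rk B le' (vertex_map v) = rk A le v"
    and "\<exists>c. c \<noteq> 0 \<and> \<psi> (rk A le v) (word [v]) = tsmult c (word [vertex_map v])"
  using someI_ex[OF psi_word_scaled_word[OF assms]] unfolding vertex_map_def[symmetric] by auto

lemma vertex_map_geq2: "v \<in> geq2 A le \<Longrightarrow> vertex_map v \<in> geq2 B le'"
  using vertex_map[of v] by (simp add: geq2_def)

lemma deg1_word_geq2: "v \<in> geq2 A le \<Longrightarrow> deg1 A le (rk A le v) (word [v])"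
  by (intro deg1_word) (auto simp: geq2_def Vplus_def)

lemma inj_on_vertex_map: "inj_on vertex_map (geq2 A le)"
proof
  fix v v' assume v: "v \<in> geq2 A le" and v': "v' \<in> geq2 A le"
    and eq: "vertex_map v = vertex_map v'"
  obtain c where c: "c \<noteq> 0" "\<psi> (rk A le v) (word [v]) = tsmult c (word [vertex_map v])"
    using vertex_map(3)[OF v] by blast
  obtain c' where c': "\<psi> (rk A le v') (word [v']) = tsmult c' (word [vertex_map v'])"
    using vertex_map(3)[OF v'] by blast
  have rk: "rk A le v' = rk A le v" using vertex_map(2)[OF v] vertex_map(2)[OF v'] eq by simp
  have "\<psi> (rk A le v) (tsmult (c' / c) (word [v])) = tsmult (c' / c) (\<psi> (rk A le v) (word [v]))"
    by (rule psi_tsmult[OF deg1_word_geq2[OF v]])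
  also have "\<dots> = \<psi> (rk A le v) (word [v'])"
    using c c' eq rk by (auto simp: tsmult_def)
  finally have "\<psi> (rk A le v) (word [v']) = \<psi> (rk A le v) (tsmult (c' / c) (word [v]))" ..
  then have "word [v'] = tsmult (c' / c) (word [v])"
    using deg1_word_geq2[OF v'] rk
    by (intro psi_inj[OF _ deg1_tsmult[OF deg1_word_geq2[OF v]]]) simp_all
  from fun_cong[OF this, of "[v']"] show "v = v'"
    by (auto simp: word_def tsmult_def split: if_splits)
qed

lemma vertex_map_two_lower_covers:
  assumes v: "v \<in> geq2 A le"
  obtains p q where "p \<in> Sdown B le' (vertex_map v)" "q \<in> Sdown B le' (vertex_map v)" "p \<noteq> q"
proof -
  define n where "n = rk A le v"
  have vA: "v \<in> A" and n: "n \<ge> 2" using v by (auto simp: geq2_def n_def)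
  obtain s t where st: "s \<in> Sdown A le v" "t \<in> Sdown A le v" "s \<noteq> t"
    using atomic_lattice_two_lower_covers[OF finA latA atA rkA vA] n by (auto simp: n_def)
  have ss: "deg1 A le (n - 1) (word [s] :: 'a list \<Rightarrow> 'k::field)"
    using Sdown_in_Vplus[OF rkA _ st(1)] n by (intro deg1_word) (auto simp: n_def)
  have "tmult (word [v]) (word [s] :: 'a list \<Rightarrow> 'k::field) \<notin> BIdeal A le"
  proof
    assume "tmult (word [v]) (word [s] :: 'a list \<Rightarrow> 'k::field) \<in> BIdeal A le"
    then have "\<forall>p\<in>Sdown A le v. \<forall>q\<in>Sdown A le v. word [s] [p] = (word [s] [q] :: 'k::field)"
      using scaled_word_tmult_in_BIdeal_iff[OF finA vA n_def[symmetric] n one_neq_zero ss]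
      unfolding tsmult_one by blast
    from bspec[OF bspec[OF this st(1)] st(2)] st(3) show False by (simp add: word_def)
  qed
  then have "tmult (\<psi> n (word [v])) (\<psi> (n - 1) (word [s])) \<notin> BIdeal B le'"
    using psi_tmult_in_BIdeal_iff[OF deg1_word_geq2[OF v] ss] by (simp add: n_def)
  moreover obtain c where c: "c \<noteq> 0" "\<psi> n (word [v]) = tsmult c (word [vertex_map v])"
    using vertex_map(3)[OF v] by (auto simp: n_def)
  ultimately have "tmult (tsmult c (word [vertex_map v])) (\<psi> (n - 1) (word [s])) \<notin> BIdeal B le'"
    by simp
  then have "\<not> (\<forall>p\<in>Sdown B le' (vertex_map v). \<forall>q\<in>Sdown B le' (vertex_map v).
      \<psi> (n - 1) (word [s]) [p] = \<psi> (n - 1) (word [s]) [q])"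
    using scaled_word_tmult_in_BIdeal_iff[OF finB vertex_map(1)[OF v]
      vertex_map(2)[OF v, folded n_def] n c(1) deg1_psi[OF ss]] by blast
  then show thesis using that by blast
qed

lemma vertex_map_covers_iff:
  assumes v: "v \<in> geq2 A le" and w: "w \<in> geq2 A le"
  shows "covers A le v w \<longleftrightarrow> covers B le' (vertex_map v) (vertex_map w)"
proof (cases "rk A le v = Suc (rk A le w)")
  case True
  define n where "n = rk A le v"
  have n: "n \<ge> 2" and vA: "v \<in> A" "rk A le v = n" and wA: "w \<in> A" "rk A le w = n - 1"
    using v w True by (auto simp: geq2_def n_def)
  obtain c d where c: "c \<noteq> 0" "\<psi> n (word [v]) = tsmult c (word [vertex_map v])"
    and d: "d \<noteq> 0" "\<psi> (n - 1) (word [w]) = tsmult d (word [vertex_map w])"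
    using vertex_map(3)[OF v] vertex_map(3)[OF w] vA wA by metis
  obtain p q where "p \<in> Sdown A le v" "q \<in> Sdown A le v" "p \<noteq> q"
    using atomic_lattice_two_lower_covers[OF finA latA atA rkA vA(1)] n vA by auto
  note in_A = scaled_words_tmult_in_BIdeal_iff[OF finA n one_neq_zero[where 'a='k] one_neq_zero vA wA this]
  have "vertex_map v \<in> B" "rk B le' (vertex_map v) = n"
    and "vertex_map w \<in> B" "rk B le' (vertex_map w) = n - 1"
    using vertex_map[OF v] vertex_map[OF w] vA wA by auto
  moreover obtain p' q' where "p' \<in> Sdown B le' (vertex_map v)" "q' \<in> Sdown B le' (vertex_map v)"
    "p' \<noteq> q'"
    using vertex_map_two_lower_covers[OF v] .
  ultimately have in_B: "tmult (tsmult c (word [vertex_map v])) (tsmult d (word [vertex_map w]))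
      \<in> BIdeal B le' \<longleftrightarrow> \<not> covers B le' (vertex_map v) (vertex_map w)"
    by (rule scaled_words_tmult_in_BIdeal_iff[OF finB n c(1) d(1)])
  have "deg1 A le n (word [v] :: 'a list \<Rightarrow> 'k::field)" "deg1 A le (n - 1) (word [w] :: 'a list \<Rightarrow> 'k::field)"
    using deg1_word_geq2[OF v] deg1_word_geq2[OF w] vA wA by simp_all
  from psi_tmult_in_BIdeal_iff[OF this] show ?thesis
    using in_A in_B c(2) d(2) by simp
next
  case False
  then show ?thesis
    using rk_covers[OF rkA, of v w] rk_covers[OF rkB, of "vertex_map v" "vertex_map w"]
      vertex_map(2)[OF v] vertex_map(2)[OF w] by auto
qed

lemma vertex_map_surj: "vertex_map ` geq2 A le = geq2 B le'"
proof
  show "vertex_map ` geq2 A le \<subseteq> geq2 B le'" using vertex_map_geq2 by blast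
  show "geq2 B le' \<subseteq> vertex_map ` geq2 A le"
  proof
    fix u assume u: "u \<in> geq2 B le'"
    define n where "n = rk B le' u"
    have "deg1 B le' n (word [u])"
      using u by (intro deg1_word) (auto simp: geq2_def Vplus_def n_def)
    then obtain x where x: "deg1 A le n x" "\<psi> n x = word [u]" by (rule psi_surj)
    from x(2) have "\<psi> n x [u] \<noteq> 0" by (simp add: word_def)
    then obtain a where a: "x [a] \<noteq> 0" "\<psi> n (word [a]) [u] \<noteq> 0"
      unfolding psi_deg1_expansion[OF x(1)] by (auto elim: sum.not_neutral_contains_not_neutral)
    have ag: "a \<in> geq2 A le" using deg1_nonzero_singleton[OF x(1) a(1)] u by (auto simp: geq2_def n_def)
    then obtain c where "\<psi> n (word [a]) = tsmult c (word [vertex_map a])"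
      using vertex_map(3) deg1_nonzero_singleton(3)[OF x(1) a(1)] by metis
    with a(2) have "vertex_map a = u" by (auto simp: tsmult_def word_def split: if_splits)
    with ag show "u \<in> vertex_map ` geq2 A le" by blast
  qed
qed

lemma bij_betw_vertex_map: "bij_betw vertex_map (geq2 A le) (geq2 B le')"
  using inj_on_vertex_map vertex_map_surj by (simp add: bij_betw_def)

lemma le_iff_le_vertex_map:
  assumes x: "x \<in> geq2 A le" and y: "y \<in> geq2 A le"
  shows "le x y \<longleftrightarrow> le' (vertex_map x) (vertex_map y)"
proof -
  have poA: "is_poset A le" using latA by (simp add: is_lattice_def)
  have "le x y \<longleftrightarrow> (covers_geq2 A le)\<^sup>*\<^sup>* y x"
    by (rule le_iff_rtranclp_covers_geq2[OF finA poA rkA x y])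
  also have "\<dots> \<longleftrightarrow> (covers_geq2 B le')\<^sup>*\<^sup>* (vertex_map y) (vertex_map x)"
    by (rule rtranclp_bij_betw_iff[OF bij_betw_vertex_map _ _ _ y x])
      (auto simp: covers_geq2_def vertex_map_covers_iff vertex_map_geq2)
  also have "\<dots> \<longleftrightarrow> le' (vertex_map x) (vertex_map y)"
    using le_iff_rtranclp_covers_geq2[OF finB poB rkB] vertex_map_geq2 x y by blast
  finally show ?thesis .
qed

end

theorem mainTheorem16:
  fixes A :: "'a set" and le :: "'a \<Rightarrow> 'a \<Rightarrow> bool"
    and B :: "'b set" and le' :: "'b \<Rightarrow> 'b \<Rightarrow> bool"
  assumes "finite A" and "is_lattice A le" and "atomic A le" and "ranked A le"
    and "uniform A le"
    and "finite B" and "is_poset B le'" and "ranked B le'"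
    and "\<exists>!x. minimal_el B le' x"
    and "B_equiv TYPE('k::field) B le' A le"
  shows "\<exists>f. bij_betw f (geq2 A le) (geq2 B le') \<and>
           (\<forall>x\<in>geq2 A le. \<forall>y\<in>geq2 A le. le x y \<longleftrightarrow> le' (f x) (f y))"
proof -
  obtain \<phi> :: "('a list \<Rightarrow> 'k) \<Rightarrow> ('b list \<Rightarrow> 'k)" where "graded_iso A le B le' \<phi>"
    using assms(10) unfolding B_equiv_def by blast
  with assms interpret B_iso_atomic A le B le' \<phi>
    by unfold_locales auto
  show ?thesis
    using bij_betw_vertex_map le_iff_le_vertex_map by blast
qed

end
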